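(* Let $\Sigma=\begin{pmatrix}\Sigma_{11}&\Sigma_{12}\\ \Sigma_{12}&\Sigma_{22}\end{pmatrix}$ be a real symmetric positive semidefinite $2\times 2$ matrix with $\Sigma_{11}>0$ and $\Sigma_{22}>0$, and let $b_1,b_2$ be real numbers. Define \[\rho=\frac{\Sigma_{12}}{\sqrt{\Sigma_{11}\Sigma_{22}}},\qquad \rho^*=\sqrt{\frac{\Sigma_{22}}{\Sigma_{11}}}.\] Let $(Z_1,Z_2)$ be a bivariate normal random vector with $\mathbb{E}Z_1=\mathbb{E}Z_2=0$, $\operatorname{Var}(Z_1)=\operatorname{Var}(Z_2)=1$ and $\operatorname{Cov}(Z_1,Z_2)=\rho$, and let $(Z_1^*,Z_2^* )$ be a bivariate normal random vector with $\mathbb{E}Z^*_1=\mathbb{E}Z^*_2=0$, $\operatorname{Var}(Z^*_1)=\operatorname{Var}(Z^*_2)=1$ and $\operatorname{Cov}(Z^*_1,Z^*_2)=\rho^*$. Let \[\alpha=\mathbb{P}(Z_1^*>b_1 \,\cup\, Z_2^*>b_2).\] Suppose that (1) $b_1\ge b_2\ge 0$, and (2) $\Sigma_{12}\ge \Sigma_{22}$. Then \[\mathbb{P}(Z_1>b_1\,\cup\, Z_2>b_2)\le \alpha .\]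
   Context: Interpretation (not needed for the statement): $\Sigma$ is the covariance matrix of two successive asymptotically normal, mean-zero treatment-effect estimates $(\hat\eta_1,\hat\eta_2)$ under the null hypothesis, $Z_k=\hat\eta_k/\sqrt{\Sigma_{kk}}$ are the standardised statistics, and $(Z_1^*,Z_2^* )$ are the standardised statistics of a sequence with the same variances but with the "canonical" covariance $\operatorname{Cov}=\Sigma_{22}$; $b_1,b_2$ are upper (efficacy) boundary values of a two-analysis group sequential test, computed so that the canonical sequence has type 1 error $\alpha$. Under hypotheses (2) and positive semidefiniteness one has $\Sigma_{22}\le\Sigma_{11}$, so $\rho^*\in(0,1]$ and the distribution of $(Z_1^*,Z_2^* )$ is well defined. *)

theory Defs
  imports "HOL-Probability.Probability"
begin

text \<open>Standard bivariate normal law (means 0, variances 1, correlation r, with |r| \<le> 1):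
  the law of (X, r X + sqrt(1 - r^2) Y) for X, Y independent standard normal.
  This determines the unique centred Gaussian law on R^2 with covariance matrix
  [[1, r], [r, 1]] (including the degenerate cases r = 1 or r = -1).\<close>
definition std_bivariate_normal :: "real \<Rightarrow> (real \<times> real) measure" where
  "std_bivariate_normal r =
     distr (density lborel std_normal_density \<Otimes>\<^sub>M density lborel std_normal_density) borel
       (\<lambda>(x, y). (x, r * x + sqrt (1 - r\<^sup>2) * y))"

definition is_std_bivariate_normal ::
    "'a measure \<Rightarrow> ('a \<Rightarrow> real) \<Rightarrow> ('a \<Rightarrow> real) \<Rightarrow> real \<Rightarrow> bool" where
  "is_std_bivariate_normal M Z1 Z2 r \<longleftrightarrow>
     prob_space M \<and> Z1 \<in> borel_measurable M \<and> Z2 \<in> borel_measurable M \<and>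
     distr M borel (\<lambda>\<omega>. (Z1 \<omega>, Z2 \<omega>)) = std_bivariate_normal r"

end

theory Submission
  imports Defs
begin

text \<open>Write \<open>Z = (X, r X + sqrt (1 - r\<^sup>2) Y)\<close> with \<open>X, Y\<close> independent standard normal, and
  likewise with \<open>q = \<rho>\<^sup>* \<le> r = \<rho>\<close>. With \<open>u = (r, sqrt (1 - r\<^sup>2))\<close> and
  \<open>v = (q, sqrt (1 - q\<^sup>2))\<close> the two probabilities are \<open>P(E\<^sub>u)\<close> and \<open>P(E\<^sub>v)\<close> for the standard
  Gaussian measure \<open>P\<close> on the plane, where \<open>E\<^sub>u = {p. p\<^sub>1 > b\<^sub>1 \<or> \<langle>u, p\<rangle> > b\<^sub>2}\<close>.
  The reflection exchanging \<open>u\<close> and \<open>v\<close> preserves \<open>P\<close> (it is a product of shears and a flip,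
  which preserve Lebesgue measure, and it fixes the density \<open>exp (-(x\<^sup>2 + y\<^sup>2) / 2)\<close>). It maps
  \<open>E\<^sub>u - E\<^sub>v\<close> into \<open>E\<^sub>v - E\<^sub>u\<close>: it swaps \<open>\<langle>u, p\<rangle>\<close> and \<open>\<langle>v, p\<rangle>\<close>, and where \<open>\<langle>v, p\<rangle> > \<langle>u, p\<rangle>\<close>
  it moves \<open>p\<close> by a positive multiple of \<open>u - v\<close>, increasing the first coordinate.
  Hence \<open>P(E\<^sub>u - E\<^sub>v) \<le> P(E\<^sub>v - E\<^sub>u)\<close>.\<close>

lemma (in sigma_finite_measure) distr_pair_measure_fibrewise_invariant:
  assumes g[measurable]: "(\<lambda>(x, y). g x y) \<in> measurable (K \<Otimes>\<^sub>M M) M"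
    and invariant: "\<And>x. x \<in> space K \<Longrightarrow> distr M M (g x) = M"
  shows "distr (K \<Otimes>\<^sub>M M) (K \<Otimes>\<^sub>M M) (\<lambda>(x, y). (x, g x y)) = K \<Otimes>\<^sub>M M"
    (is "distr ?KM ?KM ?T = ?KM")
proof (rule measure_eqI)
  fix A assume "A \<in> sets (distr ?KM ?KM ?T)"
  then have A: "A \<in> sets ?KM" by simp
  have T: "?T \<in> measurable ?KM ?KM" by measurable
  have fibre: "emeasure M (Pair x -` (?T -` A \<inter> space ?KM)) = emeasure M (Pair x -` A)"
    if x: "x \<in> space K" for x
  proof -
    have gx: "g x \<in> measurable M M" using measurable_Pair2[OF g x] by simp
    have "Pair x -` (?T -` A \<inter> space ?KM) = g x -` (Pair x -` A) \<inter> space M"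
      using x by (auto simp: space_pair_measure)
    then show ?thesis using emeasure_distr[OF gx sets_Pair1[OF A]] invariant[OF x] by simp
  qed
  have "emeasure (distr ?KM ?KM ?T) A = emeasure ?KM (?T -` A \<inter> space ?KM)"
    by (rule emeasure_distr[OF T A])
  also have "\<dots> = (\<integral>\<^sup>+x. emeasure M (Pair x -` (?T -` A \<inter> space ?KM)) \<partial>K)"
    by (rule emeasure_pair_measure_alt) (use T A in measurable)
  also have "\<dots> = (\<integral>\<^sup>+x. emeasure M (Pair x -` A) \<partial>K)"
    by (rule nn_integral_cong) (rule fibre)
  also have "\<dots> = emeasure ?KM A"
    by (rule emeasure_pair_measure_alt[symmetric, OF A])
  finally show "emeasure (distr ?KM ?KM ?T) A = emeasure ?KM A" .
qed simp

lemma lborel_pair_shear_snd: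
  fixes c :: real
  shows "distr (lborel \<Otimes>\<^sub>M lborel) (lborel \<Otimes>\<^sub>M lborel) (\<lambda>(x, y). (x, y + c * x)) = lborel \<Otimes>\<^sub>M lborel"
proof (rule lborel.distr_pair_measure_fibrewise_invariant)
  show "distr lborel lborel (\<lambda>y. y + c * x) = lborel" for x
    using lborel_distr_plus[of "c * x"] by (simp add: add.commute cong: distr_cong)
qed simp

lemma lborel_pair_neg_snd:
  "distr (lborel \<Otimes>\<^sub>M lborel) (lborel \<Otimes>\<^sub>M lborel) (\<lambda>(x, y). (x, - y))
    = (lborel \<Otimes>\<^sub>M lborel :: (real \<times> real) measure)"
proof (rule lborel.distr_pair_measure_fibrewise_invariant)
  show "distr lborel lborel uminus = (lborel :: real measure)"
    using lborel_distr_uminus by (simp cong: distr_cong)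
qed simp

lemma lborel_pair_swap_conj_invariant:
  fixes T :: "real \<times> real \<Rightarrow> real \<times> real"
  assumes T[measurable]: "T \<in> measurable (lborel \<Otimes>\<^sub>M lborel) (lborel \<Otimes>\<^sub>M lborel)"
    and invariant: "distr (lborel \<Otimes>\<^sub>M lborel) (lborel \<Otimes>\<^sub>M lborel) T = lborel \<Otimes>\<^sub>M lborel"
  shows "distr (lborel \<Otimes>\<^sub>M lborel) (lborel \<Otimes>\<^sub>M lborel) (prod.swap \<circ> T \<circ> prod.swap)
    = lborel \<Otimes>\<^sub>M lborel"
proof -
  let ?Q = "lborel \<Otimes>\<^sub>M lborel :: (real \<times> real) measure"
  have swap_eq: "prod.swap = (\<lambda>(x, y). (y, x))"
    by (auto simp: fun_eq_iff)
  have [measurable]: "prod.swap \<in> measurable ?Q ?Q"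
    unfolding swap_eq by (rule measurable_pair_swap')
  have swap: "distr ?Q ?Q prod.swap = ?Q"
    unfolding swap_eq by (rule lborel_pair.distr_pair_swap[symmetric])
  have "distr ?Q ?Q (prod.swap \<circ> T \<circ> prod.swap)
      = distr (distr (distr ?Q ?Q prod.swap) ?Q T) ?Q prod.swap"
    by (simp add: distr_distr comp_assoc)
  then show ?thesis by (simp only: swap invariant)
qed

lemma lborel_pair_shear_fst:
  fixes c :: real
  shows "distr (lborel \<Otimes>\<^sub>M lborel) (lborel \<Otimes>\<^sub>M lborel) (\<lambda>(x, y). (x + c * y, y)) = lborel \<Otimes>\<^sub>M lborel"
proof -
  have swap_conj: "(\<lambda>(x, y). (x + c * y, y)) = prod.swap \<circ> (\<lambda>(x, y). (x, y + c * x)) \<circ> prod.swap"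
    by auto
  show ?thesis
    unfolding swap_conj
    by (rule lborel_pair_swap_conj_invariant) (simp_all add: lborel_pair_shear_snd)
qed

lemma lborel_pair_neg_fst:
  "distr (lborel \<Otimes>\<^sub>M lborel) (lborel \<Otimes>\<^sub>M lborel) (\<lambda>(x, y). (- x, y))
    = (lborel \<Otimes>\<^sub>M lborel :: (real \<times> real) measure)"
proof -
  have swap_conj: "(\<lambda>(x, y). (- x, y)) = prod.swap \<circ> (\<lambda>(x :: real, y :: real). (x, - y)) \<circ> prod.swap"
    by auto
  show ?thesis
    unfolding swap_conj
    by (rule lborel_pair_swap_conj_invariant) (simp_all add: lborel_pair_neg_snd)
qed

text \<open>For \<open>a \<noteq> -1\<close> the reflection is a product of three shears and a flip (with
  \<open>t = b / (1 + a)\<close>), for \<open>a = -1\<close> it is a flip.\<close>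
lemma lborel_pair_reflection:
  fixes a b :: real
  assumes ab: "a\<^sup>2 + b\<^sup>2 = 1"
  shows "distr (lborel \<Otimes>\<^sub>M lborel) (lborel \<Otimes>\<^sub>M lborel)
      (\<lambda>(x, y). (a * x + b * y, b * x - a * y)) = lborel \<Otimes>\<^sub>M lborel"
proof (cases "a = -1")
  case True
  then have "b = 0" using ab by simp
  then have "(\<lambda>(x, y). (a * x + b * y, b * x - a * y)) = (\<lambda>(x, y). (- x, y))"
    using True by auto
  then show ?thesis by (simp add: lborel_pair_neg_fst)
next
  case False
  define t where "t = b / (1 + a)"
  have a1: "1 + a \<noteq> 0"
    using False by linarith
  then have t1: "t * (1 + a) = b"
    unfolding t_def by simp
  have "(t * b + a - 1) * (1 + a) = b * (t * (1 + a)) + a\<^sup>2 - 1"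
    by (simp add: algebra_simps power2_eq_square)
  also have "\<dots> = 0"
    using ab by (simp add: t1 power2_eq_square)
  finally have "t * b + a - 1 = 0"
    using a1 by (simp only: mult_eq_0_iff) simp
  then have t: "t * b + a = 1" "t + t * a = b"
    using t1 by (simp_all add: algebra_simps)
  let ?Q = "lborel \<Otimes>\<^sub>M lborel :: (real \<times> real) measure"
  let ?F = "\<lambda>(x, y). (x, - y)" and ?S1 = "\<lambda>(x, y). (x + (- t) * y, y)"
    and ?S2 = "\<lambda>(x, y). (x, y + b * x)"
  have shears: "(\<lambda>(x, y). (a * x + b * y, b * x - a * y)) = ?S1 \<circ> (?S2 \<circ> (?S1 \<circ> ?F))"
  proof (rule ext, clarify)
    fix x y :: real
    show "(a * x + b * y, b * x - a * y) = (?S1 \<circ> (?S2 \<circ> (?S1 \<circ> ?F))) (x, y)"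
      unfolding comp_def case_prod_conv prod.inject using t by algebra
  qed
  have "distr ?Q ?Q (?S1 \<circ> (?S2 \<circ> (?S1 \<circ> ?F)))
      = distr (distr (distr (distr ?Q ?Q ?F) ?Q ?S1) ?Q ?S2) ?Q ?S1"
    by (simp add: distr_distr)
  then show ?thesis
    unfolding shears by (simp only: lborel_pair_neg_snd lborel_pair_shear_fst lborel_pair_shear_snd)
qed

abbreviation std_normal_pair :: "(real \<times> real) measure" where
  "std_normal_pair \<equiv> std_normal_distribution \<Otimes>\<^sub>M std_normal_distribution"

lemma prob_space_std_normal_pair: "prob_space std_normal_pair"
  by (intro prob_space_pair prob_space_normal_density) simp_all

lemma sets_std_normal_pair: "sets std_normal_pair = sets borel"
  by (simp add: borel_prod[symmetric] cong: sets_pair_measure_cong)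

lemma std_normal_pair_eq_density:
  "std_normal_pair = density (lborel \<Otimes>\<^sub>M lborel)
    (\<lambda>(x, y). ennreal (exp (- (x\<^sup>2 + y\<^sup>2) / 2) / (2 * pi)))"
proof -
  interpret N: prob_space std_normal_distribution
    by (rule prob_space_normal_density) simp
  have "std_normal_pair = density (lborel \<Otimes>\<^sub>M lborel)
      (\<lambda>(x, y). ennreal (std_normal_density x) * ennreal (std_normal_density y))"
    by (rule pair_measure_density)
      (auto intro: N.sigma_finite_measure_axioms lborel.sigma_finite_measure_axioms)
  also have "\<dots> = density (lborel \<Otimes>\<^sub>M lborel)
      (\<lambda>(x, y). ennreal (exp (- (x\<^sup>2 + y\<^sup>2) / 2) / (2 * pi)))"
    by (intro density_cong)
      (auto simp: ennreal_mult'[symmetric] std_normal_density_def power2_eq_square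
        exp_add[symmetric] add_divide_distrib diff_divide_distrib)
  finally show ?thesis .
qed

lemma std_normal_pair_reflection:
  fixes a b :: real
  assumes ab: "a\<^sup>2 + b\<^sup>2 = 1"
  shows "distr std_normal_pair std_normal_pair (\<lambda>(x, y). (a * x + b * y, b * x - a * y))
    = std_normal_pair"
proof -
  let ?Q = "lborel \<Otimes>\<^sub>M lborel :: (real \<times> real) measure"
  let ?R = "\<lambda>(x, y). (a * x + b * y, b * x - a * y)"
  let ?g = "\<lambda>(x, y). ennreal (exp (- (x\<^sup>2 + y\<^sup>2) / 2) / (2 * pi))"
  have "(a * x + b * y)\<^sup>2 + (b * x - a * y)\<^sup>2 = (a\<^sup>2 + b\<^sup>2) * (x\<^sup>2 + y\<^sup>2)" for x y
    by (simp add: power2_eq_square algebra_simps)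
  then have rotation: "(a * x + b * y)\<^sup>2 + (b * x - a * y)\<^sup>2 = x\<^sup>2 + y\<^sup>2" for x y
    using ab by simp
  have g_R: "?g (?R p) = ?g p" for p
    by (cases p) (simp only: case_prod_conv rotation)
  have "distr std_normal_pair std_normal_pair ?R = distr (density ?Q ?g) ?Q ?R"
    by (simp add: std_normal_pair_eq_density cong: distr_cong)
  also have "\<dots> = distr (density ?Q (\<lambda>p. ?g (?R p))) ?Q ?R"
    by (simp only: g_R)
  also have "\<dots> = density (distr ?Q ?Q ?R) ?g"
    by (rule density_distr[symmetric]) simp_all
  also have "\<dots> = std_normal_pair"
    by (simp add: lborel_pair_reflection[OF ab] std_normal_pair_eq_density)
  finally show ?thesis .
qed

lemma (in finite_measure) measure_le_by_invariant_map:
  assumes T: "T \<in> measurable M M" and invariant: "distr M M T = M"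
    and A: "A \<in> sets M" and B: "B \<in> sets M"
    and maps: "T -` (A - B) \<inter> space M \<subseteq> B - A"
  shows "measure M A \<le> measure M B"
proof -
  have "measure M (A - B) = measure M (T -` (A - B) \<inter> space M)"
    using measure_distr[OF T, of "A - B"] invariant A B by auto
  also have "\<dots> \<le> measure M (B - A)"
    using maps A B by (intro finite_measure_mono) auto
  finally show ?thesis
    using finite_measure_Diff'[OF A B] finite_measure_Diff'[OF B A] by (simp add: Int_commute)
qed

lemma reflection_exchanging_unit_vectors:
  fixes r s q w x y :: real
  assumes rs: "r\<^sup>2 + s\<^sup>2 = 1" and qw: "q\<^sup>2 + w\<^sup>2 = 1"
  defines "a \<equiv> r * q - s * w" and "b \<equiv> s * q + r * w"
  shows "a\<^sup>2 + b\<^sup>2 = 1"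
    and "r * (a * x + b * y) + s * (b * x - a * y) = q * x + w * y"
    and "q * (a * x + b * y) + w * (b * x - a * y) = r * x + s * y"
  using rs qw unfolding a_def b_def by algebra+

text \<open>The reflection moves such a point by a positive multiple of \<open>(r, s) - (q, w)\<close>.\<close>
lemma reflection_exchanging_unit_vectors_fst_less:
  fixes r s q w x y :: real
  assumes rs: "r\<^sup>2 + s\<^sup>2 = 1" and qw: "q\<^sup>2 + w\<^sup>2 = 1" and "q < r"
    and closer: "r * x + s * y < q * x + w * y"
  defines "a \<equiv> r * q - s * w" and "b \<equiv> s * q + r * w"
  shows "x < a * x + b * y"
proof -
  define d where "d = 1 - r * q - s * w"
  have "2 * d = (r - q)\<^sup>2 + (s - w)\<^sup>2"
    unfolding d_def using rs qw by algebra
  moreover have "(r - q)\<^sup>2 > 0"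
    using \<open>q < r\<close> by simp
  ultimately have "d > 0"
    using zero_le_power2[of "s - w"] by linarith
  have "d * ((a - 1) * x + b * y) = (r - q) * ((q * x + w * y) - (r * x + s * y))"
    unfolding a_def b_def d_def using rs qw by algebra
  also have "\<dots> > 0"
    using \<open>q < r\<close> closer by simp
  finally have "(a - 1) * x + b * y > 0"
    using \<open>d > 0\<close> by (rule zero_less_mult_pos)
  then show ?thesis
    by (simp add: algebra_simps)
qed

lemma std_normal_pair_union_event_mono:
  fixes q r b1 b2 :: real
  assumes "-1 \<le> q" "q \<le> r" "r \<le> 1"
  shows "measure std_normal_pair {(x, y). b1 < x \<or> b2 < r * x + sqrt (1 - r\<^sup>2) * y}
       \<le> measure std_normal_pair {(x, y). b1 < x \<or> b2 < q * x + sqrt (1 - q\<^sup>2) * y}"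
proof (cases "q = r")
  case False
  interpret P: prob_space std_normal_pair
    by (rule prob_space_std_normal_pair)
  define s where "s = sqrt (1 - r\<^sup>2)"
  define w where "w = sqrt (1 - q\<^sup>2)"
  have "\<bar>r\<bar> \<le> 1" "\<bar>q\<bar> \<le> 1"
    using assms by auto
  then have rs: "r\<^sup>2 + s\<^sup>2 = 1" and qw: "q\<^sup>2 + w\<^sup>2 = 1"
    unfolding s_def w_def by (simp_all add: abs_square_le_1)
  define a where "a = r * q - s * w"
  define b where "b = s * q + r * w"
  let ?R = "\<lambda>(x, y). (a * x + b * y, b * x - a * y)"
  let ?Er = "{(x, y). b1 < x \<or> b2 < r * x + s * y}"
  let ?Eq = "{(x, y). b1 < x \<or> b2 < q * x + w * y}"
  have "measure std_normal_pair ?Er \<le> measure std_normal_pair ?Eq"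
  proof (rule P.measure_le_by_invariant_map)
    show "?R \<in> measurable std_normal_pair std_normal_pair"
      by simp
    show "distr std_normal_pair std_normal_pair ?R = std_normal_pair"
      using reflection_exchanging_unit_vectors(1)[OF rs qw] unfolding a_def b_def
      by (rule std_normal_pair_reflection)
    show "?Er \<in> sets std_normal_pair" "?Eq \<in> sets std_normal_pair"
      unfolding sets_std_normal_pair split_def
      by (intro borel_open open_Collect_disj open_Collect_less continuous_intros)+
    show "?R -` (?Er - ?Eq) \<inter> space std_normal_pair \<subseteq> ?Eq - ?Er"
    proof
      fix p
      assume "p \<in> ?R -` (?Er - ?Eq) \<inter> space std_normal_pair"
      then obtain x y where p: "p = (x, y)" and "\<not> b1 < a * x + b * y"
        and "b2 < r * (a * x + b * y) + s * (b * x - a * y)"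
        and "\<not> b2 < q * (a * x + b * y) + w * (b * x - a * y)"
        by (cases p) auto
      then have "\<not> b1 < a * x + b * y" "b2 < q * x + w * y" "\<not> b2 < r * x + s * y"
        using reflection_exchanging_unit_vectors(2,3)[OF rs qw] unfolding a_def b_def by auto
      moreover have "x < a * x + b * y"
        using reflection_exchanging_unit_vectors_fst_less[OF rs qw, of x y] calculation False assms(2)
        unfolding a_def b_def by simp
      ultimately show "p \<in> ?Eq - ?Er"
        unfolding p by auto
    qed
  qed
  then show ?thesis
    unfolding s_def w_def .
qed simp

lemma measure_std_bivariate_normal:
  assumes Z: "is_std_bivariate_normal M Z1 Z2 r" and U: "U \<in> sets borel"
  shows "measure M {\<omega> \<in> space M. (Z1 \<omega>, Z2 \<omega>) \<in> U}
       = measure std_normal_pair {(x, y). (x, r * x + sqrt (1 - r\<^sup>2) * y) \<in> U}"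
proof -
  have [measurable]: "Z1 \<in> borel_measurable M" "Z2 \<in> borel_measurable M"
    and law: "distr M borel (\<lambda>\<omega>. (Z1 \<omega>, Z2 \<omega>)) = std_bivariate_normal r"
    using Z unfolding is_std_bivariate_normal_def by auto
  let ?T = "\<lambda>(x, y). (x, r * x + sqrt (1 - r\<^sup>2) * y)"
  have "measure M {\<omega> \<in> space M. (Z1 \<omega>, Z2 \<omega>) \<in> U} = measure (distr M borel (\<lambda>\<omega>. (Z1 \<omega>, Z2 \<omega>))) U"
    using U by (subst measure_distr) (auto intro!: arg_cong[where f = "measure M"])
  also have "\<dots> = measure (distr std_normal_pair borel ?T) U"
    unfolding law std_bivariate_normal_def ..
  also have "\<dots> = measure std_normal_pair {(x, y). ?T (x, y) \<in> U}"
    using U by (subst measure_distr) (auto simp: space_pair_measure intro!: arg_cong[where f = "measure _"])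
  finally show ?thesis
    by simp
qed

lemma prob_std_bivariate_normal_exceeds:
  assumes "is_std_bivariate_normal M Z1 Z2 r"
  shows "measure M {\<omega> \<in> space M. Z1 \<omega> > b1 \<or> Z2 \<omega> > b2}
       = measure std_normal_pair {(x, y). b1 < x \<or> b2 < r * x + sqrt (1 - r\<^sup>2) * y}"
proof -
  have "{z :: real \<times> real. b1 < fst z \<or> b2 < snd z} \<in> sets borel"
    by (intro borel_open open_Collect_disj open_Collect_less continuous_intros)
  from measure_std_bivariate_normal[OF assms this] show ?thesis
    by simp
qed

lemma psd_quadratic_form_offdiag_le:
  fixes S11 S12 S22 :: real
  assumes psd: "\<forall>x y. S11 * x\<^sup>2 + 2 * S12 * x * y + S22 * y\<^sup>2 \<ge> 0" and "S11 > 0"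
  shows "S12 \<le> sqrt (S11 * S22)"
proof (rule real_le_rsqrt)
  have "0 \<le> S11 * S12\<^sup>2 + 2 * S12 * S12 * (- S11) + S22 * (- S11)\<^sup>2"
    using psd by blast
  also have "\<dots> = S11 * (S11 * S22 - S12\<^sup>2)"
    by (simp add: power2_eq_square algebra_simps)
  finally show "S12\<^sup>2 \<le> S11 * S22"
    using \<open>S11 > 0\<close> by (simp add: zero_le_mult_iff)
qed

theorem theorem2:
  fixes S11 S12 S22 b1 b2 :: real
    and M :: "'a measure" and Z1 Z2 :: "'a \<Rightarrow> real"
    and N :: "'b measure" and Zs1 Zs2 :: "'b \<Rightarrow> real"
  assumes psd: "\<forall>x y. S11 * x\<^sup>2 + 2 * S12 * x * y + S22 * y\<^sup>2 \<ge> 0"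
    and pos11: "S11 > 0" and pos22: "S22 > 0"
    and Z: "is_std_bivariate_normal M Z1 Z2 (S12 / sqrt (S11 * S22))"
    and Zs: "is_std_bivariate_normal N Zs1 Zs2 (sqrt (S22 / S11))"
    and h1: "b1 \<ge> b2" "b2 \<ge> 0"
    and h2: "S12 \<ge> S22"
  shows "measure M {\<omega> \<in> space M. Z1 \<omega> > b1 \<or> Z2 \<omega> > b2}
           \<le> measure N {\<omega> \<in> space N. Zs1 \<omega> > b1 \<or> Zs2 \<omega> > b2}"
proof -
  have sqrt_pos: "sqrt (S11 * S22) > 0"
    using pos11 pos22 by simp
  have "-1 \<le> sqrt (S22 / S11)"
    using pos11 pos22 by (intro order_trans[OF _ real_sqrt_ge_zero]) simp_all
  moreover have "sqrt (S22 / S11) \<le> S12 / sqrt (S11 * S22)"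
  proof -
    have "sqrt (S22 / S11) = S22 / sqrt (S11 * S22)"
      using pos11 pos22 by (simp add: real_sqrt_divide real_sqrt_mult field_simps)
    also have "\<dots> \<le> S12 / sqrt (S11 * S22)"
      using h2 sqrt_pos by (simp add: divide_right_mono)
    finally show ?thesis .
  qed
  moreover have "S12 / sqrt (S11 * S22) \<le> 1"
    using psd_quadratic_form_offdiag_le[OF psd pos11] sqrt_pos by simp
  ultimately show ?thesis
    unfolding prob_std_bivariate_normal_exceeds[OF Z] prob_std_bivariate_normal_exceeds[OF Zs]
    by (rule std_normal_pair_union_event_mono)
qed

end
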